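(* Let $A\ge\chi^2\rho^2$ and $\Delta t>0$. Let $(\phi^k)_{k\ge0}\subset\mathcal{C}_{\rm per}$ be grid functions with $0<\phi^k_{i,j}<1/\rho$ for all $k,i,j$, such that $\phi^1=\phi^0$ and, for every $k\ge1$, $\phi^{k+1}$ together with some $\mu^{k+1}\in\mathcal{C}_{\rm per}$ satisfies $$\frac{3\phi^{k+1}-4\phi^k+\phi^{k-1}}{2\Delta t}=\Delta_h\mu^{k+1},$$ $$\mu^{k+1}=S'(\phi^{k+1})+\kappa'(\phi^{k+1})\big(a_x((D_x\phi^{k+1})^2)+a_y((D_y\phi^{k+1})^2)\big)-2d_x(A_x\kappa(\phi^{k+1})D_x\phi^{k+1})-2d_y(A_y\kappa(\phi^{k+1})D_y\phi^{k+1})+H'(2\phi^k-\phi^{k-1})-A\Delta t\,\Delta_h(\phi^{k+1}-\phi^k).$$ For $n\ge1$ define the modified discrete energy $$E_h(\phi^{n+1},\phi^n):=F(\phi^{n+1})+\frac{1}{4\Delta t}\|\phi^{n+1}-\phi^n\|_{-1,h}^2+\chi\rho\|\phi^{n+1}-\phi^n\|_2^2.$$ Then for every $n\ge1$, $$E_h(\phi^{n+1},\phi^n)+\Delta t\Big(1-\frac{\chi^2\rho^2}{A}\Big)\Big\|\frac{\phi^{n+1}-\phi^n}{\Delta t}\Big\|_{-1,h}^2\le E_h(\phi^n,\phi^{n-1}).$$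
   Context: Parameters: $N_1,N_2,\chi>0$, $\alpha=\pi(\sqrt{N_2/\pi}+N_1/2)^2$, $\beta=\alpha/\sqrt{\pi N_2}$, $\tau=\sqrt{\pi N_2}N_1$, $\rho=1+N_2/\tau$. $S(\phi)=\frac{\phi}{\tau}\ln\frac{\alpha\phi}{\tau}+\frac{\phi}{N_1}\ln\frac{\beta\phi}{\tau}+(1-\rho\phi)\ln(1-\rho\phi)$, $S'(\phi)=(\frac1\tau+\frac1{N_1})\ln\phi-\rho\ln(1-\rho\phi)$ (additive constants omitted), $H(\phi)=\chi\phi(1-\rho\phi)$, $H'(\phi)=-2\chi\rho\phi$, $\kappa(\phi)=\frac1{36\phi(1-\phi)}$, $\kappa'(\phi)=\frac{2\phi-1}{36\phi^2(1-\phi)^2}$. Grid: $\Omega=(0,L)^2$, $h=L/N$, $\mathcal{C}_{\rm per}$ = $N$-periodic cell-centered grid functions. $D_x\nu_{i+1/2,j}=(\nu_{i+1,j}-\nu_{i,j})/h$, $A_x\nu_{i+1/2,j}=(\nu_{i+1,j}+\nu_{i,j})/2$; for edge functions $a_xf_{i,j}=(f_{i+1/2,j}+f_{i-1/2,j})/2$, $d_xf_{i,j}=(f_{i+1/2,j}-f_{i-1/2,j})/h$; analogously in $y$; $\Delta_h=d_xD_x+d_yD_y$. Inner product $(\nu,\xi)=h^2\sum_{i,j=1}^N\nu_{i,j}\xi_{i,j}$, $\|\nu\|_2^2=(\nu,\nu)$. For $\nu$ with zero mean, $\|\nu\|_{-1,h}^2=(\nu,(-\Delta_h)^{-1}\nu)$,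 with $(-\Delta_h)^{-1}\nu$ the unique zero-mean solution $\psi$ of $-\Delta_h\psi=\nu$. Discrete energy $F(\phi)=h^2\sum_{i,j=1}^N\big(S(\phi_{i,j})+H(\phi_{i,j})+\kappa(\phi_{i,j})(a_x((D_x\phi)^2)_{i,j}+a_y((D_y\phi)^2)_{i,j})\big)$. (The scheme conserves mass, so $\phi^{n+1}-\phi^n$ has zero mean.) *)

theory Defs
  imports Complex_Main
begin

definition alpha :: "real \<Rightarrow> real \<Rightarrow> real" where
  "alpha N1 N2 = pi * (sqrt (N2 / pi) + N1 / 2)^2"
definition beta :: "real \<Rightarrow> real \<Rightarrow> real" where
  "beta N1 N2 = alpha N1 N2 / sqrt (pi * N2)"
definition tau :: "real \<Rightarrow> real \<Rightarrow> real" where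
  "tau N1 N2 = sqrt (pi * N2) * N1"
definition rho :: "real \<Rightarrow> real \<Rightarrow> real" where
  "rho N1 N2 = 1 + N2 / tau N1 N2"

definition Sfun :: "real \<Rightarrow> real \<Rightarrow> real \<Rightarrow> real" where
  "Sfun N1 N2 p =
     p / tau N1 N2 * ln (alpha N1 N2 * p / tau N1 N2)
   + p / N1 * ln (beta N1 N2 * p / tau N1 N2)
   + (1 - rho N1 N2 * p) * ln (1 - rho N1 N2 * p)"

text \<open>Derivative of S with additive constants omitted (as in the paper).\<close>
definition dSfun :: "real \<Rightarrow> real \<Rightarrow> real \<Rightarrow> real" where
  "dSfun N1 N2 p = (1 / tau N1 N2 + 1 / N1) * ln p - rho N1 N2 * ln (1 - rho N1 N2 * p)"

definition Hfun :: "real \<Rightarrow> real \<Rightarrow> real \<Rightarrow> real \<Rightarrow> real" where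
  "Hfun N1 N2 chi p = chi * p * (1 - rho N1 N2 * p)"
definition dHfun :: "real \<Rightarrow> real \<Rightarrow> real \<Rightarrow> real \<Rightarrow> real" where
  "dHfun N1 N2 chi p = - 2 * chi * rho N1 N2 * p"

definition kap :: "real \<Rightarrow> real" where
  "kap p = 1 / (36 * p * (1 - p))"
definition dkap :: "real \<Rightarrow> real" where
  "dkap p = (2 * p - 1) / (36 * p^2 * (1 - p)^2)"

text \<open>An edge function \<open>f\<close> in x-direction stores
  \<open>f_{i+1/2,j}\<close> as \<open>f i j\<close> (similarly in y-direction, \<open>f_{i,j+1/2}\<close> as \<open>f i j\<close>).\<close>

type_synonym grid = "int \<Rightarrow> int \<Rightarrow> real"

definition per :: "nat \<Rightarrow> grid \<Rightarrow> bool" where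
  "per N f \<longleftrightarrow> (\<forall>i j. f (i + int N) j = f i j \<and> f i (j + int N) = f i j)"

definition Dx :: "real \<Rightarrow> grid \<Rightarrow> grid" where
  "Dx h v i j = (v (i+1) j - v i j) / h"
definition Dy :: "real \<Rightarrow> grid \<Rightarrow> grid" where
  "Dy h v i j = (v i (j+1) - v i j) / h"
definition Ax :: "grid \<Rightarrow> grid" where
  "Ax v i j = (v (i+1) j + v i j) / 2"
definition Ay :: "grid \<Rightarrow> grid" where
  "Ay v i j = (v i (j+1) + v i j) / 2"
definition ax :: "grid \<Rightarrow> grid" where
  "ax f i j = (f i j + f (i-1) j) / 2"
definition ay :: "grid \<Rightarrow> grid" where
  "ay f i j = (f i j + f i (j-1)) / 2"
definition dx :: "real \<Rightarrow> grid \<Rightarrow> grid" where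
  "dx h f i j = (f i j - f (i-1) j) / h"
definition dy :: "real \<Rightarrow> grid \<Rightarrow> grid" where
  "dy h f i j = (f i j - f i (j-1)) / h"

definition lap :: "real \<Rightarrow> grid \<Rightarrow> grid" where
  "lap h v i j = dx h (Dx h v) i j + dy h (Dy h v) i j"

definition gsum :: "nat \<Rightarrow> grid \<Rightarrow> real" where
  "gsum N v = (\<Sum>i\<in>{1..int N}. \<Sum>j\<in>{1..int N}. v i j)"

definition ip :: "nat \<Rightarrow> real \<Rightarrow> grid \<Rightarrow> grid \<Rightarrow> real" where
  "ip N h u v = h^2 * gsum N (\<lambda>i j. u i j * v i j)"

definition norm2sq :: "nat \<Rightarrow> real \<Rightarrow> grid \<Rightarrow> real" where
  "norm2sq N h v = ip N h v v"

definition invlap :: "nat \<Rightarrow> real \<Rightarrow> grid \<Rightarrow> grid" where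
  "invlap N h v = (THE psi. per N psi \<and> gsum N psi = 0 \<and> (\<forall>i j. - lap h psi i j = v i j))"

definition normm1sq :: "nat \<Rightarrow> real \<Rightarrow> grid \<Rightarrow> real" where
  "normm1sq N h v = ip N h v (invlap N h v)"

definition Fen :: "real \<Rightarrow> real \<Rightarrow> real \<Rightarrow> nat \<Rightarrow> real \<Rightarrow> grid \<Rightarrow> real" where
  "Fen N1 N2 chi N h p = h^2 * gsum N (\<lambda>i j.
      Sfun N1 N2 (p i j) + Hfun N1 N2 chi (p i j)
      + kap (p i j) * (ax (\<lambda>a b. (Dx h p a b)^2) i j + ay (\<lambda>a b. (Dy h p a b)^2) i j))"

definition Eh :: "real \<Rightarrow> real \<Rightarrow> real \<Rightarrow> nat \<Rightarrow> real \<Rightarrow> real \<Rightarrow> grid \<Rightarrow> grid \<Rightarrow> real" where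
  "Eh N1 N2 chi N h dt p q =
     Fen N1 N2 chi N h p + 1 / (4 * dt) * normm1sq N h (\<lambda>i j. p i j - q i j)
     + chi * rho N1 N2 * norm2sq N h (\<lambda>i j. p i j - q i j)"

end

theory Submission
  imports Defs
begin

(* The potentials psi_k with -Delta_h psi_k = phi^(k+1) - phi^k turn the H^-1 norms into Dirichlet
   energies, and the scheme provides them for free: it says
   3 (phi^(k+2) - phi^(k+1)) - (phi^(k+1) - phi^k) = 2 dt Delta_h mu^(k+2), and phi^1 = phi^0.
   Testing the chemical potential with delta = phi^(n+1) - phi^n gives
   (mu, delta) >= F(phi^(n+1)) - F(phi^n) - chi rho |phi^n - phi^(n-1)|^2 + A dt |grad delta|^2:
   the entropy S and the gradient energy kap(phi) |grad phi|^2, which is jointly convex in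
   (phi, grad phi), lie above their tangents; the concave H, evaluated at the extrapolation
   2 phi^n - phi^(n-1), costs the chi rho term; the stabilization gives A dt |grad delta|^2.
   On the other side the BDF2 quotient gives
   (mu, delta) = -(3 |grad psi_n|^2 - (grad psi_(n-1), grad psi_n)) / (2 dt).
   Cauchy-Schwarz on the cross term and Young's inequality
   chi rho |delta|^2 = chi rho (grad psi_n, grad delta)
     <= A dt |grad delta|^2 + (chi rho)^2 / (4 A dt) |grad psi_n|^2
   close the estimate. *)

section \<open>Periodic grid functions and summation by parts\<close>

lemma per_const: "per N (\<lambda>i j. c)"
  by (simp add: per_def)

lemma per_map: "per N f \<Longrightarrow> per N (\<lambda>i j. F (f i j))"
  by (simp add: per_def)

lemma per_map2: "per N f \<Longrightarrow> per N g \<Longrightarrow> per N (\<lambda>i j. F (f i j) (g i j))"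
  by (simp add: per_def)

lemma per_Dx: "per N f \<Longrightarrow> per N (Dx h f)"
  unfolding per_def Dx_def by (metis add.assoc add.commute)

lemma per_Dy: "per N f \<Longrightarrow> per N (Dy h f)"
  unfolding per_def Dy_def by (metis add.assoc add.commute)

lemma per_Ax: "per N f \<Longrightarrow> per N (Ax f)"
  unfolding per_def Ax_def by (metis add.assoc add.commute)

lemma per_Ay: "per N f \<Longrightarrow> per N (Ay f)"
  unfolding per_def Ay_def by (metis add.assoc add.commute)

lemma per_shift_x: "per N f \<Longrightarrow> per N (\<lambda>i j. f (i + a) j)"
  unfolding per_def by (metis add.assoc add.commute)

lemma per_shift_y: "per N f \<Longrightarrow> per N (\<lambda>i j. f i (j + b))"
  unfolding per_def by (metis add.assoc add.commute)

lemma gsum_add: "gsum N (\<lambda>i j. f i j + g i j) = gsum N f + gsum N g"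
  by (simp add: gsum_def sum.distrib)

lemma gsum_diff: "gsum N (\<lambda>i j. f i j - g i j) = gsum N f - gsum N g"
  by (simp add: gsum_def sum_subtractf)

lemma gsum_cmult: "gsum N (\<lambda>i j. c * f i j) = c * gsum N f"
  by (simp add: gsum_def sum_distrib_left)

lemma gsum_divide: "gsum N (\<lambda>i j. f i j / c) = gsum N f / c"
  by (simp add: gsum_def sum_divide_distrib)

lemma gsum_const: "gsum N (\<lambda>i j. c) = real N * real N * c"
  by (simp add: gsum_def)

lemma gsum_mono: "(\<And>i j. f i j \<le> g i j) \<Longrightarrow> gsum N f \<le> gsum N g"
  by (simp add: gsum_def sum_mono)

lemma sum_periodic_shift:
  fixes G :: "int \<Rightarrow> real"
  assumes "\<And>i. G (i + int N) = G i"
  shows "(\<Sum>i\<in>{1..int N}. G (i + 1)) = (\<Sum>i\<in>{1..int N}. G i)"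
proof (cases "N = 0")
  case False
  then have box: "{1..int N} = insert 1 {2..int N}"
    by auto
  have "(\<Sum>i\<in>{1..int N}. G (i + 1)) = (\<Sum>i\<in>{2..int N + 1}. G i)"
    by (rule sum.reindex_bij_witness[of _ "\<lambda>i. i - 1" "\<lambda>i. i + 1"]) auto
  also have "\<dots> = G (int N + 1) + (\<Sum>i\<in>{2..int N}. G i)"
    using False by (simp add: atLeastAtMostPlus1_int_conv add.commute)
  also have "G (int N + 1) = G 1"
    using assms[of 1] by (simp add: add.commute)
  also have "G 1 + (\<Sum>i\<in>{2..int N}. G i) = (\<Sum>i\<in>{1..int N}. G i)"
    by (simp add: box)
  finally show ?thesis .
qed simp

lemma gsum_shift_x: "per N g \<Longrightarrow> gsum N (\<lambda>i j. g (i + 1) j) = gsum N g"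
  unfolding gsum_def per_def
  by (subst (1 2) sum.swap) (intro sum.cong refl sum_periodic_shift; simp)

lemma gsum_shift_y: "per N g \<Longrightarrow> gsum N (\<lambda>i j. g i (j + 1)) = gsum N g"
  unfolding gsum_def per_def by (intro sum.cong refl sum_periodic_shift; simp)

lemma gsum_dx_mult:
  assumes f: "per N f" and u: "per N u"
  shows "gsum N (\<lambda>i j. dx h f i j * u i j) = - gsum N (\<lambda>i j. f i j * Dx h u i j)"
proof -
  have shift: "gsum N (\<lambda>i j. f (i - 1) j * u i j) = gsum N (\<lambda>i j. f i j * u (i + 1) j)"
    using gsum_shift_x[OF per_map2[OF per_shift_x[OF f, of "-1"] u]] by simp
  have "gsum N (\<lambda>i j. dx h f i j * u i j)
      = gsum N (\<lambda>i j. (f i j * u i j - f (i - 1) j * u i j) / h)"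
    by (simp add: dx_def algebra_simps)
  also have "\<dots> = - gsum N (\<lambda>i j. (f i j * u (i + 1) j - f i j * u i j) / h)"
    by (simp only: gsum_divide gsum_diff shift) (simp add: diff_divide_distrib)
  also have "\<dots> = - gsum N (\<lambda>i j. f i j * Dx h u i j)"
    by (simp add: Dx_def algebra_simps)
  finally show ?thesis .
qed

lemma gsum_ax_mult:
  assumes f: "per N f" and u: "per N u"
  shows "gsum N (\<lambda>i j. ax f i j * u i j) = gsum N (\<lambda>i j. f i j * Ax u i j)"
proof -
  have shift: "gsum N (\<lambda>i j. f (i - 1) j * u i j) = gsum N (\<lambda>i j. f i j * u (i + 1) j)"
    using gsum_shift_x[OF per_map2[OF per_shift_x[OF f, of "-1"] u]] by simp
  have "gsum N (\<lambda>i j. ax f i j * u i j)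
      = gsum N (\<lambda>i j. (f i j * u i j + f (i - 1) j * u i j) / 2)"
    by (simp add: ax_def algebra_simps)
  also have "\<dots> = gsum N (\<lambda>i j. (f i j * u i j + f i j * u (i + 1) j) / 2)"
    by (simp only: gsum_divide gsum_add shift)
  also have "\<dots> = gsum N (\<lambda>i j. f i j * Ax u i j)"
    by (simp add: Ax_def algebra_simps)
  finally show ?thesis .
qed

lemma gsum_dy_mult:
  assumes f: "per N f" and u: "per N u"
  shows "gsum N (\<lambda>i j. dy h f i j * u i j) = - gsum N (\<lambda>i j. f i j * Dy h u i j)"
proof -
  have shift: "gsum N (\<lambda>i j. f i (j - 1) * u i j) = gsum N (\<lambda>i j. f i j * u i (j + 1))"
    using gsum_shift_y[OF per_map2[OF per_shift_y[OF f, of "-1"] u]] by simp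
  have "gsum N (\<lambda>i j. dy h f i j * u i j)
      = gsum N (\<lambda>i j. (f i j * u i j - f i (j - 1) * u i j) / h)"
    by (simp add: dy_def algebra_simps)
  also have "\<dots> = - gsum N (\<lambda>i j. (f i j * u i (j + 1) - f i j * u i j) / h)"
    by (simp only: gsum_divide gsum_diff shift) (simp add: diff_divide_distrib)
  also have "\<dots> = - gsum N (\<lambda>i j. f i j * Dy h u i j)"
    by (simp add: Dy_def algebra_simps)
  finally show ?thesis .
qed

lemma gsum_ay_mult:
  assumes f: "per N f" and u: "per N u"
  shows "gsum N (\<lambda>i j. ay f i j * u i j) = gsum N (\<lambda>i j. f i j * Ay u i j)"
proof -
  have shift: "gsum N (\<lambda>i j. f i (j - 1) * u i j) = gsum N (\<lambda>i j. f i j * u i (j + 1))"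
    using gsum_shift_y[OF per_map2[OF per_shift_y[OF f, of "-1"] u]] by simp
  have "gsum N (\<lambda>i j. ay f i j * u i j)
      = gsum N (\<lambda>i j. (f i j * u i j + f i (j - 1) * u i j) / 2)"
    by (simp add: ay_def algebra_simps)
  also have "\<dots> = gsum N (\<lambda>i j. (f i j * u i j + f i j * u i (j + 1)) / 2)"
    by (simp only: gsum_divide gsum_add shift)
  also have "\<dots> = gsum N (\<lambda>i j. f i j * Ay u i j)"
    by (simp add: Ay_def algebra_simps)
  finally show ?thesis .
qed

definition grad_ip :: "nat \<Rightarrow> real \<Rightarrow> grid \<Rightarrow> grid \<Rightarrow> real" where
  "grad_ip N h u w = ip N h (Dx h u) (Dx h w) + ip N h (Dy h u) (Dy h w)"

lemma ip_commute: "ip N h u v = ip N h v u"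
  unfolding ip_def by (simp add: mult.commute)

lemma grad_ip_commute: "grad_ip N h u v = grad_ip N h v u"
  unfolding grad_ip_def by (simp add: ip_commute)

lemma grad_ip_self_nonneg: "grad_ip N h u u \<ge> 0"
  unfolding grad_ip_def ip_def gsum_def by (simp add: sum_nonneg add_nonneg_nonneg)

lemma ip_lap_left:
  assumes "per N u" "per N w"
  shows "ip N h (lap h u) w = - grad_ip N h u w"
  using gsum_dx_mult[OF per_Dx[OF assms(1)] assms(2), of h]
    gsum_dy_mult[OF per_Dy[OF assms(1)] assms(2), of h]
  unfolding ip_def grad_ip_def lap_def by (simp add: distrib_right gsum_add algebra_simps)

lemma young_weighted:
  fixes K c x y :: real
  assumes "K > 0"
  shows "2 * c * x * y \<le> K * y^2 + c^2 / K * x^2"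
proof -
  have "0 \<le> (K * y - c * x)^2 / K" using assms by simp
  also have "\<dots> = K * y^2 + c^2 / K * x^2 - 2 * c * x * y"
    using assms by (simp add: field_simps power2_eq_square)
  finally show ?thesis by simp
qed

lemma ip_young:
  assumes "K > 0"
  shows "2 * c * ip N h u v \<le> K * ip N h v v + c^2 / K * ip N h u u"
proof -
  have "gsum N (\<lambda>i j. 2 * c * (u i j * v i j))
      \<le> gsum N (\<lambda>i j. K * (v i j * v i j) + c^2 / K * (u i j * u i j))"
    using young_weighted[OF assms] by (intro gsum_mono) (simp add: power2_eq_square mult.assoc)
  then have "h^2 * gsum N (\<lambda>i j. 2 * c * (u i j * v i j))
      \<le> h^2 * gsum N (\<lambda>i j. K * (v i j * v i j) + c^2 / K * (u i j * u i j))"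
    by (rule mult_left_mono) simp
  then show ?thesis
    unfolding ip_def gsum_add gsum_cmult by (simp add: algebra_simps)
qed

lemma grad_ip_young:
  assumes "K > 0"
  shows "2 * c * grad_ip N h u v \<le> K * grad_ip N h v v + c^2 / K * grad_ip N h u u"
  using ip_young[OF assms, of c N h "Dx h u" "Dx h v"] ip_young[OF assms, of c N h "Dy h u" "Dy h v"]
  unfolding grad_ip_def by (simp add: algebra_simps)

section \<open>The discrete inverse Laplacian\<close>

lemma per_multiple:
  assumes "per N f"
  shows "f (i + int N * k) (j + int N * l) = f i j"
proof -
  have x: "f (i + int N * k) j = f i j" for i j k
  proof (induction k rule: int_induct[where k = 0])
    case (step1 k)
    then show ?case
      using assms unfolding per_def by (metis distrib_left add.assoc mult.right_neutral)
  next
    case (step2 k)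
    then show ?case
      using assms unfolding per_def by (metis add.assoc diff_add_cancel distrib_left mult.right_neutral)
  qed simp
  have y: "f i (j + int N * l) = f i j" for i j l
  proof (induction l rule: int_induct[where k = 0])
    case (step1 l)
    then show ?case
      using assms unfolding per_def by (metis distrib_left add.assoc mult.right_neutral)
  next
    case (step2 l)
    then show ?case
      using assms unfolding per_def by (metis add.assoc diff_add_cancel distrib_left mult.right_neutral)
  qed simp
  show ?thesis using x y by simp
qed

lemma per_eq_box:
  assumes "per N f" "N > 0"
  shows "f i j = f ((i - 1) mod int N + 1) ((j - 1) mod int N + 1)"
proof -
  have "i = ((i - 1) mod int N + 1) + int N * ((i - 1) div int N)"
    "j = ((j - 1) mod int N + 1) + int N * ((j - 1) div int N)"
    by (simp_all add: algebra_simps)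
  then show ?thesis using per_multiple[OF assms(1)] by metis
qed

lemma per_nonneg_gsum_eq_0:
  assumes g: "per N g" "\<And>i j. g i j \<ge> 0" "gsum N g = 0" and N: "N > 0"
  shows "g i j = 0"
proof -
  let ?i = "(i - 1) mod int N + 1" and ?j = "(j - 1) mod int N + 1"
  have box: "?i \<in> {1..int N}" "?j \<in> {1..int N}"
    using N by (simp_all add: pos_mod_bound pos_mod_sign add1_zle_eq)
  have "\<forall>i\<in>{1..int N}. \<forall>j\<in>{1..int N}. g i j = 0"
    using g(3) g(2) unfolding gsum_def by (simp add: sum_nonneg sum_nonneg_eq_0_iff)
  then show ?thesis using box per_eq_box[OF g(1) N] by metis
qed

lemma shift_invariant_const:
  fixes w :: grid
  assumes "\<And>i j. w (i + 1) j = w i j" "\<And>i j. w i (j + 1) = w i j"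
  shows "w i j = w 0 0"
proof -
  have x: "w i j = w 0 j" for i j
  proof (induction i rule: int_induct[where k = 0])
    case (step1 i)
    then show ?case using assms(1)[of i j] by simp
  next
    case (step2 i)
    then show ?case using assms(1)[of "i - 1" j] by simp
  qed simp
  have y: "w 0 j = w 0 0" for j
  proof (induction j rule: int_induct[where k = 0])
    case (step1 j)
    then show ?case using assms(2)[of 0 j] by simp
  next
    case (step2 j)
    then show ?case using assms(2)[of 0 "j - 1"] by simp
  qed simp
  show ?thesis using x[of i j] y[of j] by simp
qed

lemma per_harmonic_const:
  assumes w: "per N w" and harmonic: "\<And>i j. lap h w i j = 0" and h: "h \<noteq> 0" and N: "N > 0"
  shows "w i j = w 0 0"
proof -
  let ?e = "\<lambda>i j. Dx h w i j * Dx h w i j + Dy h w i j * Dy h w i j"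
  have "h^2 * gsum N ?e = grad_ip N h w w"
    unfolding grad_ip_def ip_def by (simp add: gsum_add algebra_simps)
  also have "\<dots> = 0"
    using ip_lap_left[OF w w, of h] harmonic by (simp add: ip_def gsum_def)
  finally have e0: "gsum N ?e = 0" using h by simp
  have per_e: "per N ?e"
    using per_Dx[OF w] per_Dy[OF w] unfolding per_def by simp
  have "?e i j = 0" for i j
    by (rule per_nonneg_gsum_eq_0[OF per_e _ e0 N]) simp
  then have "Dx h w i j = 0" "Dy h w i j = 0" for i j
    by (simp_all add: add_nonneg_eq_0_iff)
  then have "w (i + 1) j = w i j" "w i (j + 1) = w i j" for i j
    using h by (simp_all add: Dx_def Dy_def)
  then show ?thesis
    by (rule shift_invariant_const)
qed

lemma ip_potential_left:
  assumes "per N \<psi>" "per N w" "\<And>i j. - lap h \<psi> i j = v i j"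
  shows "ip N h v w = grad_ip N h \<psi> w"
proof -
  have "ip N h v w = - ip N h (lap h \<psi>) w"
    unfolding ip_def by (simp flip: assms(3) add: gsum_def sum_negf)
  then show ?thesis using ip_lap_left[OF assms(1,2)] by simp
qed

lemma gsum_potential_eq_0:
  assumes "per N \<psi>" "\<And>i j. - lap h \<psi> i j = v i j" "h \<noteq> 0"
  shows "gsum N v = 0"
proof -
  have "h^2 * gsum N v = ip N h v (\<lambda>i j. 1)"
    by (simp add: ip_def)
  also have "\<dots> = 0"
    using ip_potential_left[OF assms(1) per_const[of N 1] assms(2)]
    by (simp add: grad_ip_def ip_def Dx_def Dy_def gsum_const)
  finally show ?thesis using assms(3) by simp
qed

lemma lap_diff: "lap h (\<lambda>i j. f i j - g i j) i j = lap h f i j - lap h g i j"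
  by (simp add: lap_def dx_def dy_def Dx_def Dy_def divide_inverse algebra_simps)

lemma lap_cmult: "lap h (\<lambda>i j. c * f i j) i j = c * lap h f i j"
  by (simp add: lap_def dx_def dy_def Dx_def Dy_def divide_inverse algebra_simps)

lemma lap_divide: "lap h (\<lambda>i j. f i j / c) i j = lap h f i j / c"
  by (simp add: lap_def dx_def dy_def Dx_def Dy_def divide_inverse algebra_simps)

lemma invlap_eq:
  assumes \<psi>: "per N \<psi>" and pot: "\<And>i j. - lap h \<psi> i j = v i j" and h: "h \<noteq> 0" and N: "N > 0"
  shows "invlap N h v = (\<lambda>i j. \<psi> i j - gsum N \<psi> / (real N * real N))"
  unfolding invlap_def
proof (rule the_equality)
  let ?c = "gsum N \<psi> / (real N * real N)"
  show "per N (\<lambda>i j. \<psi> i j - ?c) \<and> gsum N (\<lambda>i j. \<psi> i j - ?c) = 0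
      \<and> (\<forall>i j. - lap h (\<lambda>i j. \<psi> i j - ?c) i j = v i j)"
    using \<psi> pot N by (simp add: per_def gsum_diff gsum_const lap_diff lap_def dx_def dy_def Dx_def Dy_def)
  fix \<phi> assume \<phi>: "per N \<phi> \<and> gsum N \<phi> = 0 \<and> (\<forall>i j. - lap h \<phi> i j = v i j)"
  let ?w = "\<lambda>i j. \<phi> i j - \<psi> i j"
  have "per N ?w" using \<phi> \<psi> by (simp add: per_def)
  moreover have "lap h ?w i j = 0" for i j
  proof -
    have "- lap h \<phi> i j = - lap h \<psi> i j" using \<phi> pot[of i j] by simp
    then show ?thesis by (simp add: lap_diff)
  qed
  ultimately have const: "?w i j = ?w 0 0" for i j using per_harmonic_const h N by blast
  then have "?w = (\<lambda>i j. ?w 0 0)"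
    by (intro ext) (rule const)
  then have "gsum N ?w = real N * real N * ?w 0 0"
    unfolding gsum_const[symmetric] by (rule arg_cong)
  then have "?w 0 0 = - ?c" using \<phi> N by (simp add: gsum_diff field_simps)
  then have "\<phi> i j = \<psi> i j - ?c" for i j using const[of i j] by linarith
  then show "\<phi> = (\<lambda>i j. \<psi> i j - ?c)" by (intro ext)
qed

lemma normm1sq_eq_ip:
  assumes \<psi>: "per N \<psi>" and pot: "\<And>i j. - lap h \<psi> i j = v i j" and h: "h \<noteq> 0" and N: "N > 0"
  shows "normm1sq N h v = ip N h v \<psi>"
proof -
  let ?c = "gsum N \<psi> / (real N * real N)"
  have "(\<lambda>i j. v i j * (\<psi> i j - ?c)) = (\<lambda>i j. v i j * \<psi> i j - ?c * v i j)"
    by (simp add: fun_eq_iff algebra_simps)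
  then have "normm1sq N h v = h^2 * gsum N (\<lambda>i j. v i j * \<psi> i j - ?c * v i j)"
    by (simp only: normm1sq_def invlap_eq[OF assms] ip_def)
  also have "\<dots> = ip N h v \<psi> - ?c * (h^2 * gsum N v)"
    unfolding ip_def gsum_diff gsum_cmult by (simp add: algebra_simps)
  also have "\<dots> = ip N h v \<psi>"
    using gsum_potential_eq_0[OF \<psi> pot h] by simp
  finally show ?thesis .
qed

lemma normm1sq_divide:
  assumes \<psi>: "per N \<psi>" and pot: "\<And>i j. - lap h \<psi> i j = v i j" and h: "h \<noteq> 0" and N: "N > 0"
  shows "normm1sq N h (\<lambda>i j. v i j / c) = normm1sq N h v / c^2"
proof -
  have "normm1sq N h (\<lambda>i j. v i j / c) = ip N h (\<lambda>i j. v i j / c) (\<lambda>i j. \<psi> i j / c)"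
    using per_map[OF \<psi>, where F = "\<lambda>x. x / c"]
    by (intro normm1sq_eq_ip h N) (simp_all add: lap_divide flip: pot)
  then show ?thesis
    using normm1sq_eq_ip[OF assms] by (simp add: ip_def gsum_divide power2_eq_square)
qed

section \<open>Convexity of the energy densities\<close>

lemma rho_gt_1: "N1 > 0 \<Longrightarrow> N2 > 0 \<Longrightarrow> rho N1 N2 > 1"
  by (simp add: rho_def tau_def)

lemma xlnx_tangent:
  fixes x y :: real
  assumes "x > 0" "y > 0"
  shows "x * ln x - y * ln y \<le> (ln x + 1) * (x - y)"
proof -
  have "y * ln (x / y) \<le> y * (x / y - 1)"
    using assms by (intro mult_left_mono ln_le_minus_one) simp_all
  then have "y * (ln x - ln y) \<le> x - y"
    using assms by (simp add: ln_div right_diff_distrib)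
  then show ?thesis
    by (simp add: algebra_simps)
qed

(* The constant c accounts for the additive constant omitted in dSfun. *)
lemma Sfun_tangent:
  assumes N1: "N1 > 0" and N2: "N2 > 0"
  obtains c where "\<And>p q. 0 < p \<Longrightarrow> rho N1 N2 * p < 1 \<Longrightarrow> 0 < q \<Longrightarrow> rho N1 N2 * q < 1 \<Longrightarrow>
    Sfun N1 N2 p - Sfun N1 N2 q \<le> (dSfun N1 N2 p + c) * (p - q)"
proof -
  define K where "K = 1 / tau N1 N2 + 1 / N1"
  define L where "L = ln (alpha N1 N2 / tau N1 N2) / tau N1 N2 + ln (beta N1 N2 / tau N1 N2) / N1"
  define r where "r = rho N1 N2"
  have "sqrt (N2 / pi) + N1 / 2 > 0"
    using N1 N2 by (simp add: add_pos_pos)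
  then have pos: "tau N1 N2 > 0" "alpha N1 N2 > 0" "beta N1 N2 > 0"
    using N1 N2 by (simp_all add: tau_def alpha_def beta_def)
  have K: "K \<ge> 0" using pos N1 by (simp add: K_def)
  have ln_scaled: "ln (c * x / tau N1 N2) = ln x + ln (c / tau N1 N2)" if "c > 0" "x > 0" for c x
    using pos that ln_mult[of x "c / tau N1 N2"] by (simp add: mult.commute)
  have S: "Sfun N1 N2 x = K * (x * ln x) + L * x + (1 - r * x) * ln (1 - r * x)" if "x > 0" for x
    unfolding Sfun_def ln_scaled[OF pos(2) that] ln_scaled[OF pos(3) that]
    by (simp add: K_def L_def r_def algebra_simps add_divide_distrib)
  have dS: "dSfun N1 N2 x = K * ln x - r * ln (1 - r * x)" for x
    by (simp add: dSfun_def K_def r_def)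
  show ?thesis
  proof
    fix p q assume p: "0 < p" "rho N1 N2 * p < 1" and q: "0 < q" "rho N1 N2 * q < 1"
    have "K * (p * ln p - q * ln q) \<le> K * ((ln p + 1) * (p - q))"
      using p q K by (intro mult_left_mono xlnx_tangent) simp_all
    moreover have "(1 - r * p) * ln (1 - r * p) - (1 - r * q) * ln (1 - r * q)
        \<le> (ln (1 - r * p) + 1) * ((1 - r * p) - (1 - r * q))"
      using p q by (intro xlnx_tangent) (simp_all add: r_def)
    ultimately show "Sfun N1 N2 p - Sfun N1 N2 q \<le> (dSfun N1 N2 p + (K + L - r)) * (p - q)"
      using p q by (simp add: S dS algebra_simps)
  qed
qed

(* dHfun also omits the constant chi of H'. *)
lemma Hfun_extrapolated_tangent:
  assumes "chi * rho N1 N2 \<ge> 0"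
  shows "Hfun N1 N2 chi p - Hfun N1 N2 chi q
    \<le> dHfun N1 N2 chi (2 * q - r) * (p - q) + chi * (p - q) + chi * rho N1 N2 * (q - r)^2"
proof -
  have "dHfun N1 N2 chi (2 * q - r) * (p - q) + chi * (p - q) + chi * rho N1 N2 * (q - r)^2
      - (Hfun N1 N2 chi p - Hfun N1 N2 chi q) = chi * rho N1 N2 * (p - 2 * q + r)^2"
    by (simp add: Hfun_def dHfun_def power2_eq_square algebra_simps)
  moreover have "chi * rho N1 N2 * (p - 2 * q + r)^2 \<ge> 0"
    using assms by simp
  ultimately show ?thesis
    by linarith
qed

(* Tangent-plane inequality of the jointly convex map (a, d) |-> kap a * d^2 on (0,1) x R. *)
lemma kap_tangent:
  assumes a: "0 < a" "a < 1" and b: "0 < b" "b < 1"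
  shows "kap a * d^2 + dkap a * (b - a) * d^2 + 2 * kap a * d * (e - d) \<le> kap b * e^2"
proof -
  define f g where "f = 36 * a * (1 - a)" and "g = 36 * b * (1 - b)"
  have fg: "f > 0" "g > 0" using a b by (simp_all add: f_def g_def)
  have kap: "kap a = 1 / f" "kap b = 1 / g"
    by (simp_all add: kap_def f_def g_def mult.assoc)
  have "f^2 = 36 * (36 * a^2 * (1 - a)^2)"
    by (simp add: f_def power_mult_distrib)
  then have dkap: "dkap a = 36 * (2 * a - 1) / f^2"
    unfolding dkap_def by (simp only: mult_divide_mult_cancel_left_if) (simp add: mult.assoc)
  have g: "g + 36 * (b - a)^2 = f - 36 * (2 * a - 1) * (b - a)"
    by (simp add: f_def g_def power2_eq_square algebra_simps)
  have "kap a * d^2 + dkap a * (b - a) * d^2 + 2 * kap a * d * (e - d)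
      = 2 * d * e / f - d^2 * (g + 36 * (b - a)^2) / f^2"
    unfolding g using fg by (simp add: kap dkap field_simps power2_eq_square)
  also have "\<dots> \<le> 2 * d * e / f - d^2 * g / f^2"
    using fg by (simp add: divide_right_mono mult_left_mono)
  also have "\<dots> = e^2 / g - (e * f - d * g)^2 / (g * f^2)"
    using fg by (simp add: field_simps power2_eq_square)
  also have "\<dots> \<le> kap b * e^2"
    using fg by (simp add: kap)
  finally show ?thesis .
qed

lemma kap_edge_tangent:
  assumes "0 < a1" "a1 < 1" "0 < a2" "a2 < 1" "0 < b1" "b1 < 1" "0 < b2" "b2 < 1"
  shows "d^2 * ((kap a1 + kap a2) / 2) - e^2 * ((kap b1 + kap b2) / 2)
    \<le> d^2 * ((dkap a1 * (a1 - b1) + dkap a2 * (a2 - b2)) / 2) + 2 * ((kap a1 + kap a2) / 2 * d * (d - e))"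
  using add_mono[OF kap_tangent[of a1 b1 d e] kap_tangent[of a2 b2 d e]] assms
  by (simp add: field_simps)

lemma Dx_diff: "Dx h (\<lambda>a b. f a b - g a b) i j = Dx h f i j - Dx h g i j"
  by (simp add: Dx_def diff_divide_distrib)

lemma Dy_diff: "Dy h (\<lambda>a b. f a b - g a b) i j = Dy h f i j - Dy h g i j"
  by (simp add: Dy_def diff_divide_distrib)

definition grad_energy_density :: "real \<Rightarrow> grid \<Rightarrow> grid" where
  "grad_energy_density h u i j =
     kap (u i j) * (ax (\<lambda>a b. (Dx h u a b)^2) i j + ay (\<lambda>a b. (Dy h u a b)^2) i j)"

(* The variational derivative of h^2 * gsum N (grad_energy_density h u), i.e. the gradient terms
   of the chemical potential. *)
definition grad_energy_deriv :: "real \<Rightarrow> grid \<Rightarrow> grid" where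
  "grad_energy_deriv h u i j =
     dkap (u i j) * (ax (\<lambda>a b. (Dx h u a b)^2) i j + ay (\<lambda>a b. (Dy h u a b)^2) i j)
     - 2 * dx h (\<lambda>a b. Ax (\<lambda>c d. kap (u c d)) a b * Dx h u a b) i j
     - 2 * dy h (\<lambda>a b. Ay (\<lambda>c d. kap (u c d)) a b * Dy h u a b) i j"

lemma gsum_grad_energy_density:
  assumes "per N u"
  shows "gsum N (grad_energy_density h u)
    = gsum N (\<lambda>i j. (Dx h u i j)^2 * Ax (\<lambda>c d. kap (u c d)) i j)
      + gsum N (\<lambda>i j. (Dy h u i j)^2 * Ay (\<lambda>c d. kap (u c d)) i j)"
proof -
  have per: "per N (\<lambda>a b. (Dx h u a b)^2)" "per N (\<lambda>a b. (Dy h u a b)^2)" "per N (\<lambda>c d. kap (u c d))"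
    using per_Dx[OF assms] per_Dy[OF assms] assms unfolding per_def by simp_all
  have "gsum N (grad_energy_density h u)
    = gsum N (\<lambda>i j. ax (\<lambda>a b. (Dx h u a b)^2) i j * kap (u i j))
      + gsum N (\<lambda>i j. ay (\<lambda>a b. (Dy h u a b)^2) i j * kap (u i j))"
    unfolding grad_energy_density_def gsum_add[symmetric] by (simp add: algebra_simps)
  then show ?thesis
    by (simp only: gsum_ax_mult[OF per(1,3)] gsum_ay_mult[OF per(2,3)])
qed

lemma gsum_grad_energy_deriv_mult:
  assumes p: "per N p" and w: "per N w"
  shows "gsum N (\<lambda>i j. grad_energy_deriv h p i j * w i j)
    = gsum N (\<lambda>i j. (Dx h p i j)^2 * Ax (\<lambda>a b. dkap (p a b) * w a b) i j
        + 2 * (Ax (\<lambda>c d. kap (p c d)) i j * Dx h p i j * Dx h w i j))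
      + gsum N (\<lambda>i j. (Dy h p i j)^2 * Ay (\<lambda>a b. dkap (p a b) * w a b) i j
        + 2 * (Ay (\<lambda>c d. kap (p c d)) i j * Dy h p i j * Dy h w i j))"
proof -
  let ?X = "\<lambda>a b. (Dx h p a b)^2" and ?Y = "\<lambda>a b. (Dy h p a b)^2"
  let ?W = "\<lambda>a b. dkap (p a b) * w a b"
  let ?FX = "\<lambda>a b. Ax (\<lambda>c d. kap (p c d)) a b * Dx h p a b"
  let ?FY = "\<lambda>a b. Ay (\<lambda>c d. kap (p c d)) a b * Dy h p a b"
  have per: "per N ?X" "per N ?Y" "per N ?W" "per N ?FX" "per N ?FY"
    using per_Dx[OF p] per_Dy[OF p] p w per_Ax[OF per_map[OF p, where F = kap]]
      per_Ay[OF per_map[OF p, where F = kap]]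
    unfolding per_def by simp_all
  have "gsum N (\<lambda>i j. grad_energy_deriv h p i j * w i j)
    = gsum N (\<lambda>i j. ax ?X i j * ?W i j) + gsum N (\<lambda>i j. ay ?Y i j * ?W i j)
      - 2 * gsum N (\<lambda>i j. dx h ?FX i j * w i j) - 2 * gsum N (\<lambda>i j. dy h ?FY i j * w i j)"
    unfolding grad_energy_deriv_def gsum_add[symmetric] gsum_diff[symmetric] gsum_cmult[symmetric]
    by (simp add: algebra_simps)
  also have "\<dots> = gsum N (\<lambda>i j. ?X i j * Ax ?W i j) + gsum N (\<lambda>i j. ?Y i j * Ay ?W i j)
      + 2 * gsum N (\<lambda>i j. ?FX i j * Dx h w i j) + 2 * gsum N (\<lambda>i j. ?FY i j * Dy h w i j)"
    by (simp only: gsum_ax_mult[OF per(1,3)] gsum_ay_mult[OF per(2,3)] gsum_dx_mult[OF per(4) w]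
        gsum_dy_mult[OF per(5) w])
  finally show ?thesis
    by (simp only: gsum_add gsum_cmult)
qed

lemma gsum_grad_energy_density_diff_le:
  assumes p: "per N p" and q: "per N q"
    and bounds: "\<And>i j. 0 < p i j \<and> p i j < 1" "\<And>i j. 0 < q i j \<and> q i j < 1"
  shows "gsum N (grad_energy_density h p) - gsum N (grad_energy_density h q)
    \<le> gsum N (\<lambda>i j. grad_energy_deriv h p i j * (p i j - q i j))"
proof -
  have w: "per N (\<lambda>i j. p i j - q i j)"
    using p q by (rule per_map2)
  have "gsum N (\<lambda>i j. (Dx h p i j)^2 * Ax (\<lambda>c d. kap (p c d)) i j
        - (Dx h q i j)^2 * Ax (\<lambda>c d. kap (q c d)) i j)
      \<le> gsum N (\<lambda>i j. (Dx h p i j)^2 * Ax (\<lambda>a b. dkap (p a b) * (p a b - q a b)) i j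
        + 2 * (Ax (\<lambda>c d. kap (p c d)) i j * Dx h p i j * Dx h (\<lambda>a b. p a b - q a b) i j))"
    by (rule gsum_mono, unfold Ax_def Dx_diff, rule kap_edge_tangent) (use bounds in auto)
  moreover have "gsum N (\<lambda>i j. (Dy h p i j)^2 * Ay (\<lambda>c d. kap (p c d)) i j
        - (Dy h q i j)^2 * Ay (\<lambda>c d. kap (q c d)) i j)
      \<le> gsum N (\<lambda>i j. (Dy h p i j)^2 * Ay (\<lambda>a b. dkap (p a b) * (p a b - q a b)) i j
        + 2 * (Ay (\<lambda>c d. kap (p c d)) i j * Dy h p i j * Dy h (\<lambda>a b. p a b - q a b) i j))"
    by (rule gsum_mono, unfold Ay_def Dy_diff, rule kap_edge_tangent) (use bounds in auto)
  ultimately show ?thesis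
    unfolding gsum_grad_energy_density[OF p] gsum_grad_energy_density[OF q]
      gsum_grad_energy_deriv_mult[OF p w] gsum_diff
    by linarith
qed

section \<open>The energy estimate\<close>

lemma Fen_eq:
  "Fen N1 N2 chi N h u = h^2 * (gsum N (\<lambda>i j. Sfun N1 N2 (u i j)) + gsum N (\<lambda>i j. Hfun N1 N2 chi (u i j))
     + gsum N (grad_energy_density h u))"
  unfolding Fen_def grad_energy_density_def gsum_add[symmetric] by (simp add: add.assoc)

lemma gsum_Sfun_diff_le:
  assumes N1: "N1 > 0" and N2: "N2 > 0"
    and bp: "\<And>i j. 0 < p i j" "\<And>i j. rho N1 N2 * p i j < 1"
    and bq: "\<And>i j. 0 < q i j" "\<And>i j. rho N1 N2 * q i j < 1"
    and mean: "gsum N (\<lambda>i j. p i j - q i j) = 0"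
  shows "gsum N (\<lambda>i j. Sfun N1 N2 (p i j)) - gsum N (\<lambda>i j. Sfun N1 N2 (q i j))
    \<le> gsum N (\<lambda>i j. dSfun N1 N2 (p i j) * (p i j - q i j))"
proof -
  obtain c where S: "\<And>x y. 0 < x \<Longrightarrow> rho N1 N2 * x < 1 \<Longrightarrow> 0 < y \<Longrightarrow> rho N1 N2 * y < 1 \<Longrightarrow>
      Sfun N1 N2 x - Sfun N1 N2 y \<le> (dSfun N1 N2 x + c) * (x - y)"
    using Sfun_tangent[OF N1 N2] by blast
  have "gsum N (\<lambda>i j. Sfun N1 N2 (p i j)) - gsum N (\<lambda>i j. Sfun N1 N2 (q i j))
      \<le> gsum N (\<lambda>i j. dSfun N1 N2 (p i j) * (p i j - q i j) + c * (p i j - q i j))"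
    unfolding gsum_diff[symmetric]
    by (rule gsum_mono) (use S[OF bp bq] in \<open>simp add: algebra_simps\<close>)
  also have "\<dots> = gsum N (\<lambda>i j. dSfun N1 N2 (p i j) * (p i j - q i j))"
    using mean by (simp add: gsum_add gsum_cmult)
  finally show ?thesis .
qed

lemma gsum_Hfun_diff_le:
  assumes "chi * rho N1 N2 \<ge> 0" and mean: "gsum N (\<lambda>i j. p i j - q i j) = 0"
  shows "gsum N (\<lambda>i j. Hfun N1 N2 chi (p i j)) - gsum N (\<lambda>i j. Hfun N1 N2 chi (q i j))
    \<le> gsum N (\<lambda>i j. dHfun N1 N2 chi (2 * q i j - r i j) * (p i j - q i j))
      + chi * rho N1 N2 * gsum N (\<lambda>i j. (q i j - r i j) * (q i j - r i j))"
proof -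
  have "gsum N (\<lambda>i j. Hfun N1 N2 chi (p i j)) - gsum N (\<lambda>i j. Hfun N1 N2 chi (q i j))
      \<le> gsum N (\<lambda>i j. dHfun N1 N2 chi (2 * q i j - r i j) * (p i j - q i j) + chi * (p i j - q i j)
            + chi * rho N1 N2 * ((q i j - r i j) * (q i j - r i j)))"
    unfolding gsum_diff[symmetric] power2_eq_square[symmetric]
    using assms(1) by (intro gsum_mono Hfun_extrapolated_tangent)
  also have "\<dots> = gsum N (\<lambda>i j. dHfun N1 N2 chi (2 * q i j - r i j) * (p i j - q i j))
      + chi * rho N1 N2 * gsum N (\<lambda>i j. (q i j - r i j) * (q i j - r i j))"
    using mean by (simp add: gsum_add gsum_cmult)
  finally show ?thesis .
qed

lemma Fen_diff_le:
  assumes N1: "N1 > 0" and N2: "N2 > 0" and chi: "chi \<ge> 0"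
    and p: "per N p" and q: "per N q"
    and bp: "\<And>i j. 0 < p i j \<and> p i j < 1 / rho N1 N2"
    and bq: "\<And>i j. 0 < q i j \<and> q i j < 1 / rho N1 N2"
    and mean: "gsum N (\<lambda>i j. p i j - q i j) = 0"
  shows "Fen N1 N2 chi N h p - Fen N1 N2 chi N h q
    \<le> ip N h (\<lambda>i j. dSfun N1 N2 (p i j) + grad_energy_deriv h p i j + dHfun N1 N2 chi (2 * q i j - r i j))
        (\<lambda>i j. p i j - q i j)
      + chi * rho N1 N2 * norm2sq N h (\<lambda>i j. q i j - r i j)"
proof -
  let ?d = "\<lambda>i j. p i j - q i j"
  have rho: "rho N1 N2 > 1" using N1 N2 by (rule rho_gt_1)
  then have "1 / rho N1 N2 < 1" by simp
  then have unit_bounds: "0 < p i j \<and> p i j < 1" "0 < q i j \<and> q i j < 1" for i j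
    using bp[of i j] bq[of i j] by linarith+
  have "0 < p i j" "rho N1 N2 * p i j < 1" "0 < q i j" "rho N1 N2 * q i j < 1" for i j
    using bp[of i j] bq[of i j] rho by (simp_all add: pos_less_divide_eq mult.commute)
  note S = gsum_Sfun_diff_le[OF N1 N2 this mean]
  have H: "gsum N (\<lambda>i j. Hfun N1 N2 chi (p i j)) - gsum N (\<lambda>i j. Hfun N1 N2 chi (q i j))
      \<le> gsum N (\<lambda>i j. dHfun N1 N2 chi (2 * q i j - r i j) * ?d i j)
        + chi * rho N1 N2 * gsum N (\<lambda>i j. (q i j - r i j) * (q i j - r i j))"
    using chi rho mean by (intro gsum_Hfun_diff_le) simp_all
  note G = gsum_grad_energy_density_diff_le[OF p q unit_bounds, of h]
  have "Fen N1 N2 chi N h p - Fen N1 N2 chi N h q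
      \<le> h^2 * (gsum N (\<lambda>i j. dSfun N1 N2 (p i j) * ?d i j) + gsum N (\<lambda>i j. grad_energy_deriv h p i j * ?d i j)
        + gsum N (\<lambda>i j. dHfun N1 N2 chi (2 * q i j - r i j) * ?d i j)
        + chi * rho N1 N2 * gsum N (\<lambda>i j. (q i j - r i j) * (q i j - r i j)))"
    unfolding Fen_eq right_diff_distrib[symmetric] using S H G by (intro mult_left_mono) simp_all
  moreover have "ip N h (\<lambda>i j. dSfun N1 N2 (p i j) + grad_energy_deriv h p i j
        + dHfun N1 N2 chi (2 * q i j - r i j)) ?d
      = h^2 * (gsum N (\<lambda>i j. dSfun N1 N2 (p i j) * ?d i j) + gsum N (\<lambda>i j. grad_energy_deriv h p i j * ?d i j)
        + gsum N (\<lambda>i j. dHfun N1 N2 chi (2 * q i j - r i j) * ?d i j))"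
    unfolding ip_def by (simp only: distrib_right gsum_add)
  moreover have "norm2sq N h (\<lambda>i j. q i j - r i j) = h^2 * gsum N (\<lambda>i j. (q i j - r i j) * (q i j - r i j))"
    by (simp add: norm2sq_def ip_def)
  ultimately show ?thesis
    by (simp add: algebra_simps)
qed

lemma ip_mu_eq_bdf2:
  assumes dt: "dt > 0" and \<mu>: "per N \<mu>" and \<psi>: "per N \<psi>" and \<psi>': "per N \<psi>'"
    and pot: "\<And>i j. - lap h \<psi> i j = p i j - q i j"
    and pot': "\<And>i j. - lap h \<psi>' i j = q i j - r i j"
    and scheme: "\<And>i j. (3 * p i j - 4 * q i j + r i j) / (2 * dt) = lap h \<mu> i j"
  shows "ip N h \<mu> (\<lambda>i j. p i j - q i j) = - (3 * grad_ip N h \<psi> \<psi> - grad_ip N h \<psi>' \<psi>) / (2 * dt)"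
proof -
  let ?d = "\<lambda>i j. p i j - q i j" and ?d' = "\<lambda>i j. q i j - r i j"
  have "(\<lambda>i j. lap h \<mu> i j * \<psi> i j) = (\<lambda>i j. (3 * (?d i j * \<psi> i j) - ?d' i j * \<psi> i j) / (2 * dt))"
    using dt by (simp add: fun_eq_iff field_simps flip: scheme)
  then have "ip N h (lap h \<mu>) \<psi> = (3 * ip N h ?d \<psi> - ip N h ?d' \<psi>) / (2 * dt)"
    unfolding ip_def by (simp only: gsum_divide gsum_diff gsum_cmult) (simp add: field_simps)
  then show ?thesis
    using ip_potential_left[OF \<psi> \<mu> pot] ip_lap_left[OF \<mu> \<psi>]
      ip_potential_left[OF \<psi> \<psi> pot] ip_potential_left[OF \<psi>' \<psi> pot']
    by (simp add: ip_commute grad_ip_commute diff_divide_distrib)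
qed

lemma Fen_diff_le_ip_mu:
  assumes N1: "N1 > 0" and N2: "N2 > 0" and chi: "chi \<ge> 0"
    and p: "per N p" and q: "per N q"
    and bp: "\<And>i j. 0 < p i j \<and> p i j < 1 / rho N1 N2"
    and bq: "\<And>i j. 0 < q i j \<and> q i j < 1 / rho N1 N2"
    and mean: "gsum N (\<lambda>i j. p i j - q i j) = 0"
    and chem: "\<And>i j. \<mu> i j = dSfun N1 N2 (p i j) + grad_energy_deriv h p i j
      + dHfun N1 N2 chi (2 * q i j - r i j) - A * dt * lap h (\<lambda>a b. p a b - q a b) i j"
  shows "Fen N1 N2 chi N h p - Fen N1 N2 chi N h q - chi * rho N1 N2 * norm2sq N h (\<lambda>i j. q i j - r i j)
      + A * dt * grad_ip N h (\<lambda>i j. p i j - q i j) (\<lambda>i j. p i j - q i j)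
    \<le> ip N h \<mu> (\<lambda>i j. p i j - q i j)"
proof -
  let ?d = "\<lambda>i j. p i j - q i j"
  let ?convex_concave = "\<lambda>i j. dSfun N1 N2 (p i j) + grad_energy_deriv h p i j
    + dHfun N1 N2 chi (2 * q i j - r i j)"
  have "(\<lambda>i j. \<mu> i j * ?d i j) = (\<lambda>i j. ?convex_concave i j * ?d i j - A * dt * (lap h ?d i j * ?d i j))"
    by (simp add: fun_eq_iff chem algebra_simps)
  then have "ip N h \<mu> ?d = ip N h ?convex_concave ?d - A * dt * ip N h (lap h ?d) ?d"
    unfolding ip_def by (simp only: gsum_diff gsum_cmult) (simp add: algebra_simps)
  moreover have "per N ?d"
    using p q by (rule per_map2)
  ultimately show ?thesis
    using Fen_diff_le[OF N1 N2 chi p q bp bq mean, of h r] ip_lap_left[of N ?d ?d h] by simp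
qed

lemma modified_energy_step:
  assumes N1: "N1 > 0" and N2: "N2 > 0" and chi: "chi > 0"
    and A: "A \<ge> chi^2 * (rho N1 N2)^2" and dt: "dt > 0" and h: "h \<noteq> 0" and N: "N > 0"
    and p: "per N p" and q: "per N q" and \<mu>: "per N \<mu>" and \<psi>: "per N \<psi>" and \<psi>': "per N \<psi>'"
    and bp: "\<And>i j. 0 < p i j \<and> p i j < 1 / rho N1 N2"
    and bq: "\<And>i j. 0 < q i j \<and> q i j < 1 / rho N1 N2"
    and pot: "\<And>i j. - lap h \<psi> i j = p i j - q i j"
    and pot': "\<And>i j. - lap h \<psi>' i j = q i j - r i j"
    and scheme: "\<And>i j. (3 * p i j - 4 * q i j + r i j) / (2 * dt) = lap h \<mu> i j"
    and chem: "\<And>i j. \<mu> i j = dSfun N1 N2 (p i j) + grad_energy_deriv h p i j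
      + dHfun N1 N2 chi (2 * q i j - r i j) - A * dt * lap h (\<lambda>a b. p a b - q a b) i j"
  shows "Eh N1 N2 chi N h dt p q + dt * (1 - chi^2 * (rho N1 N2)^2 / A)
      * normm1sq N h (\<lambda>i j. (p i j - q i j) / dt)
    \<le> Eh N1 N2 chi N h dt q r"
proof -
  let ?d = "\<lambda>i j. p i j - q i j" and ?d' = "\<lambda>i j. q i j - r i j"
  define k where "k = chi * rho N1 N2"
  have "k^2 > 0"
    using chi rho_gt_1[OF N1 N2] by (simp add: k_def)
  then have A_pos: "A > 0"
    using A by (simp add: k_def power_mult_distrib)
  define a b x where "a = grad_ip N h \<psi> \<psi> / dt" and "b = grad_ip N h \<psi>' \<psi>' / dt"
    and "x = grad_ip N h \<psi>' \<psi> / dt"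
  define g where "g = k^2 / A * a"
  have energy: "Fen N1 N2 chi N h p - Fen N1 N2 chi N h q - k * norm2sq N h ?d'
      + A * dt * grad_ip N h ?d ?d \<le> - 3 / 2 * a + x / 2"
    using Fen_diff_le_ip_mu[OF N1 N2 _ p q bp bq gsum_potential_eq_0[OF \<psi> pot h] chem] chi dt
      ip_mu_eq_bdf2[OF dt \<mu> \<psi> \<psi>' pot pot' scheme]
    by (simp add: k_def a_def x_def field_simps)
  have "2 * grad_ip N h \<psi>' \<psi> \<le> grad_ip N h \<psi> \<psi> + grad_ip N h \<psi>' \<psi>'"
    using grad_ip_young[of 1 1 N h \<psi>' \<psi>] by simp
  then have cauchy: "2 * x \<le> a + b"
    using dt by (simp add: a_def b_def x_def field_simps)
  have "2 * k * grad_ip N h \<psi> ?d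
      \<le> 2 * A * dt * grad_ip N h ?d ?d + k^2 / (2 * A * dt) * grad_ip N h \<psi> \<psi>"
    using grad_ip_young[of "2 * A * dt" k N h \<psi> ?d] A_pos dt by simp
  then have young: "k * norm2sq N h ?d \<le> A * dt * grad_ip N h ?d ?d + g / 4"
    unfolding norm2sq_def ip_potential_left[OF \<psi> per_map2[OF p q] pot] g_def a_def
    using A_pos dt by (simp add: field_simps)
  have g_nonneg: "0 \<le> g"
    using A_pos dt grad_ip_self_nonneg by (simp add: g_def a_def)
  have P: "normm1sq N h ?d = grad_ip N h \<psi> \<psi>"
    and P': "normm1sq N h ?d' = grad_ip N h \<psi>' \<psi>'"
    using normm1sq_eq_ip[OF \<psi> pot h N] ip_potential_left[OF \<psi> \<psi> pot]
      normm1sq_eq_ip[OF \<psi>' pot' h N] ip_potential_left[OF \<psi>' \<psi>' pot'] by simp_all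
  have P_dt: "normm1sq N h (\<lambda>i j. ?d i j / dt) = grad_ip N h \<psi> \<psi> / dt^2"
    using normm1sq_divide[OF \<psi> pot h N] P by simp
  have lhs: "Eh N1 N2 chi N h dt p q + dt * (1 - chi^2 * (rho N1 N2)^2 / A)
      * normm1sq N h (\<lambda>i j. (p i j - q i j) / dt)
    = Fen N1 N2 chi N h p + a / 4 + k * norm2sq N h ?d + (a - g)"
    unfolding Eh_def P P_dt g_def a_def k_def using dt by (simp add: field_simps power2_eq_square)
  have rhs: "Eh N1 N2 chi N h dt q r = Fen N1 N2 chi N h q + b / 4 + k * norm2sq N h ?d'"
    unfolding Eh_def P' b_def k_def by simp
  show ?thesis
    unfolding lhs rhs using energy cauchy young g_nonneg by linarith
qed

(* The scheme itself supplies the potentials, so no solvability theory for the discrete Poisson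
   equation is needed. *)
lemma scheme_potentials:
  fixes phi mu :: "nat \<Rightarrow> grid"
  assumes dt: "dt > 0"
    and per_mu: "\<And>k. k \<ge> 1 \<Longrightarrow> per N (mu (k+1))"
    and init: "phi 1 = phi 0"
    and eq1: "\<And>k i j. k \<ge> 1 \<Longrightarrow>
        (3 * phi (k+1) i j - 4 * phi k i j + phi (k-1) i j) / (2 * dt) = lap h (mu (k+1)) i j"
  obtains \<psi> :: "nat \<Rightarrow> grid"
  where "\<And>k. per N (\<psi> k)" "\<And>k i j. - lap h (\<psi> k) i j = phi (k+1) i j - phi k i j"
proof -
  define \<psi> :: "nat \<Rightarrow> grid"
    where "\<psi> = rec_nat (\<lambda>i j. 0) (\<lambda>k \<psi>k i j. (\<psi>k i j - 2 * dt * mu (k + 2) i j) / 3)"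
  have \<psi>_Suc: "\<psi> (Suc k) = (\<lambda>i j. (\<psi> k i j - 2 * dt * mu (k + 2) i j) / 3)" for k
    by (simp add: \<psi>_def)
  have "per N (\<psi> k) \<and> (\<forall>i j. - lap h (\<psi> k) i j = phi (k+1) i j - phi k i j)" for k
  proof (induction k)
    case 0
    show ?case using init by (simp add: \<psi>_def per_const lap_def dx_def dy_def Dx_def Dy_def)
  next
    case (Suc k)
    have "per N (mu (k + 2))"
      using per_mu[of "Suc k"] by simp
    then have "per N (\<psi> (Suc k))"
      using Suc.IH unfolding \<psi>_Suc per_def by simp
    moreover have "- lap h (\<psi> (Suc k)) i j = phi (Suc k + 1) i j - phi (Suc k) i j" for i j
      using Suc.IH eq1[of "Suc k" i j] dt
      by (simp add: \<psi>_Suc lap_divide lap_diff lap_cmult field_simps)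
    ultimately show ?case by blast
  qed
  then show ?thesis using that by blast
qed

theorem theorem5p1:
  fixes N1 N2 chi L A dt :: real and N :: nat and h :: real
    and phi mu :: "nat \<Rightarrow> grid"
  assumes N1: "N1 > 0" and N2: "N2 > 0" and chi: "chi > 0"
    and L: "L > 0" and N: "N > 0" and h: "h = L / real N"
    and A: "A \<ge> chi^2 * (rho N1 N2)^2" and dt: "dt > 0"
    and per_phi: "\<And>k. per N (phi k)"
    and per_mu: "\<And>k. k \<ge> 1 \<Longrightarrow> per N (mu (k+1))"
    and bounds: "\<And>k i j. 0 < phi k i j \<and> phi k i j < 1 / rho N1 N2"
    and init: "phi 1 = phi 0"
    and eq1: "\<And>k i j. k \<ge> 1 \<Longrightarrow>
        (3 * phi (k+1) i j - 4 * phi k i j + phi (k-1) i j) / (2 * dt) = lap h (mu (k+1)) i j"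
    and eq2: "\<And>k i j. k \<ge> 1 \<Longrightarrow>
        mu (k+1) i j =
          dSfun N1 N2 (phi (k+1) i j)
          + dkap (phi (k+1) i j) * (ax (\<lambda>a b. (Dx h (phi (k+1)) a b)^2) i j
                                  + ay (\<lambda>a b. (Dy h (phi (k+1)) a b)^2) i j)
          - 2 * dx h (\<lambda>a b. Ax (\<lambda>c d. kap (phi (k+1) c d)) a b * Dx h (phi (k+1)) a b) i j
          - 2 * dy h (\<lambda>a b. Ay (\<lambda>c d. kap (phi (k+1) c d)) a b * Dy h (phi (k+1)) a b) i j
          + dHfun N1 N2 chi (2 * phi k i j - phi (k-1) i j)
          - A * dt * lap h (\<lambda>a b. phi (k+1) a b - phi k a b) i j"
    and n: "n \<ge> 1"
  shows "Eh N1 N2 chi N h dt (phi (n+1)) (phi n)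
         + dt * (1 - chi^2 * (rho N1 N2)^2 / A)
             * normm1sq N h (\<lambda>i j. (phi (n+1) i j - phi n i j) / dt)
         \<le> Eh N1 N2 chi N h dt (phi n) (phi (n-1))"
proof -
  have h0: "h \<noteq> 0" using h L N by simp
  obtain \<psi> where \<psi>: "\<And>k. per N (\<psi> k)" "\<And>k i j. - lap h (\<psi> k) i j = phi (k+1) i j - phi k i j"
    using scheme_potentials[OF dt per_mu init eq1] by blast
  have pot': "- lap h (\<psi> (n - 1)) i j = phi n i j - phi (n - 1) i j" for i j
    using \<psi>(2)[of "n - 1" i j] n by simp
  have chem: "mu (n+1) i j = dSfun N1 N2 (phi (n+1) i j) + grad_energy_deriv h (phi (n+1)) i j
      + dHfun N1 N2 chi (2 * phi n i j - phi (n-1) i j)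
      - A * dt * lap h (\<lambda>a b. phi (n+1) a b - phi n a b) i j" for i j
    using eq2[OF n, of i j] by (simp add: grad_energy_deriv_def algebra_simps)
  show ?thesis
    by (rule modified_energy_step[OF N1 N2 chi A dt h0 N per_phi per_phi per_mu[OF n] \<psi>(1) \<psi>(1)
          bounds bounds \<psi>(2) pot' eq1[OF n] chem])
qed

end
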